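(* Let $(x_n)_n$ be a block sequence in $J$ which is equivalent to the unit vector basis $(e_n)$ of $J$. Then the closed linear span $[x_n]$ is complemented in $J$.
   Context: The James space $J$ is the space of real sequences $x=(x(n))_{n\in\mathbb N}$ with $\|x\|=\sup\big(\sum_{i=1}^m|\sum_{k\in I_i}x(k)|^2\big)^{1/2}<\infty$, the supremum taken over all $m$ and all pairwise disjoint finite intervals $I_1,\dots,I_m$ of $\mathbb N$. The unit vectors $(e_n)$ form a basis of $J$; a block sequence is a sequence of nonzero finitely supported vectors with $\max\operatorname{supp}x_n<\min\operatorname{supp}x_{n+1}$. *)

theory Defs
  imports Complex_Main
begin

definition james_sums :: "(nat \<Rightarrow> real) \<Rightarrow> real set" where
  "james_sums x = { sqrt (\<Sum>i<m. (\<Sum>k\<in>I i. x k)^2) | m (I :: nat \<Rightarrow> nat set).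
      (\<forall>i<m. \<exists>a b. I i = {a..b}) \<and> (\<forall>i<m. \<forall>j<m. i \<noteq> j \<longrightarrow> I i \<inter> I j = {}) }"

definition jnorm :: "(nat \<Rightarrow> real) \<Rightarrow> real" where
  "jnorm x = Sup (james_sums x)"

definition James :: "(nat \<Rightarrow> real) set" where
  "James = {x. bdd_above (james_sums x)}"

definition unit_vec :: "nat \<Rightarrow> nat \<Rightarrow> real" where
  "unit_vec n = (\<lambda>k. if k = n then 1 else 0)"

definition supp :: "(nat \<Rightarrow> real) \<Rightarrow> nat set" where
  "supp v = {k. v k \<noteq> 0}"

definition block_sequence :: "(nat \<Rightarrow> nat \<Rightarrow> real) \<Rightarrow> bool" where
  "block_sequence x \<longleftrightarrow>
     (\<forall>n. x n \<noteq> (\<lambda>_. 0) \<and> finite (supp (x n))) \<and>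
     (\<forall>n. Max (supp (x n)) < Min (supp (x (Suc n))))"

definition lincomb :: "(nat \<Rightarrow> real) \<Rightarrow> (nat \<Rightarrow> nat \<Rightarrow> real) \<Rightarrow> nat \<Rightarrow> nat \<Rightarrow> real" where
  "lincomb a x N = (\<lambda>k. \<Sum>n<N. a n * x n k)"

definition equivalent_seq :: "(nat \<Rightarrow> nat \<Rightarrow> real) \<Rightarrow> (nat \<Rightarrow> nat \<Rightarrow> real) \<Rightarrow> bool" where
  "equivalent_seq x y \<longleftrightarrow> (\<exists>c C. 0 < c \<and> 0 < C \<and>
     (\<forall>a N. c * jnorm (lincomb a y N) \<le> jnorm (lincomb a x N) \<and>
            jnorm (lincomb a x N) \<le> C * jnorm (lincomb a y N)))"

definition closed_span :: "(nat \<Rightarrow> nat \<Rightarrow> real) \<Rightarrow> (nat \<Rightarrow> real) set" where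
  "closed_span x = {y \<in> James. \<forall>\<epsilon>>0. \<exists>a N. jnorm (\<lambda>k. y k - lincomb a x N k) < \<epsilon>}"

definition complemented :: "(nat \<Rightarrow> real) set \<Rightarrow> bool" where
  "complemented Y \<longleftrightarrow> (\<exists>P. (\<forall>u\<in>James. P u \<in> Y) \<and>
     (\<forall>u\<in>James. \<forall>v\<in>James. \<forall>\<alpha> \<beta>. P (\<lambda>k. \<alpha> * u k + \<beta> * v k) = (\<lambda>k. \<alpha> * P u k + \<beta> * P v k)) \<and>
     (\<exists>M. \<forall>u\<in>James. jnorm (P u) \<le> M * jnorm u) \<and>
     (\<forall>y\<in>Y. P y = y))"

end

theory Submission
  imports Defs "HOL-Analysis.L2_Norm" "HOL-Analysis.Convex"
begin

(* Write x_n = sum of x_n(k) e_k over [p_n, q_n] and sigma_n = sum_k x_n(k). An interval contains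
   the blocks it covers and meets at most two others, whence

     ||sum a_n x_n||^2 <= 2 ||sum a_n sigma_n e_n||^2 + 4 C^2 sum a_n^2.

   Together with the lower estimate c ||sum a_n e_n|| <= ||sum a_n x_n|| this shows that
   |sigma_n| >= c/2 for all n >= N0, and that ||sum a_n e_n|| is controlled by
   ||sum a_n sigma_n e_n|| when only such n occur. For n >= N0 let x_n^*(u) be the sum of u over
   the window [p_n, p_(n+1)), divided by sigma_n. The windows are consecutive intervals, so
   ||sum sigma_n x_n^*(u) e_n|| <= ||u||, and hence the coefficients x_n^*(u) form a bounded
   sequence in J. Completing them by any biorthogonal functionals for the finitely many n < N0,
   P u = sum x_n^*(u) x_n is a bounded projection onto [x_n]. *)

section \<open>The James norm\<close>

definition interval_family :: "nat \<Rightarrow> (nat \<Rightarrow> nat set) \<Rightarrow> bool" where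
  "interval_family m I \<longleftrightarrow>
     (\<forall>i<m. \<exists>a b. I i = {a..b}) \<and> (\<forall>i<m. \<forall>j<m. i \<noteq> j \<longrightarrow> I i \<inter> I j = {})"

definition james_sum :: "(nat \<Rightarrow> real) \<Rightarrow> nat \<Rightarrow> (nat \<Rightarrow> nat set) \<Rightarrow> real" where
  "james_sum u m I = (\<Sum>i<m. (\<Sum>k\<in>I i. u k)\<^sup>2)"

lemma james_sums_eq: "james_sums u = {sqrt (james_sum u m I) | m I. interval_family m I}"
  by (simp add: james_sums_def interval_family_def james_sum_def)

lemma sqrt_james_sum_eq_L2_set: "sqrt (james_sum u m I) = L2_set (\<lambda>i. \<Sum>k\<in>I i. u k) {..<m}"
  by (simp add: james_sum_def L2_set_def)

lemma interval_family_0 [simp]: "interval_family 0 I"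
  by (simp add: interval_family_def)

lemma interval_family_finite: "interval_family m I \<Longrightarrow> i < m \<Longrightarrow> finite (I i)"
  unfolding interval_family_def by auto

lemma interval_family_bounded: "interval_family m I \<Longrightarrow> \<exists>K. \<forall>i<m. I i \<subseteq> {..<K}"
  using finite_nat_set_iff_bounded[of "\<Union>i<m. I i"] by (auto simp: interval_family_finite)

lemma interval_family_Int_atLeast:
  assumes "interval_family m I"
  shows "interval_family m (\<lambda>i. I i \<inter> {M..})"
  unfolding interval_family_def
proof (intro conjI allI impI)
  fix i assume "i < m"
  then obtain a b where "I i = {a..b}" using assms unfolding interval_family_def by blast
  then show "\<exists>a b. I i \<inter> {M..} = {a..b}" by auto
next
  fix i j assume "i < m" "j < m" "i \<noteq> j"
  then show "I i \<inter> {M..} \<inter> (I j \<inter> {M..}) = {}" using assms unfolding interval_family_def by blast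
qed

lemma ex_atLeastAtMost_if_convex:
  fixes S :: "nat set"
  assumes "finite S" and convex: "\<And>a b k. a \<in> S \<Longrightarrow> b \<in> S \<Longrightarrow> a \<le> k \<Longrightarrow> k \<le> b \<Longrightarrow> k \<in> S"
  shows "\<exists>a b. S = {a..b}"
proof (cases "S = {}")
  case True
  then have "S = {1..0}" by simp
  then show ?thesis by blast
next
  case False
  have "S \<subseteq> {Min S..Max S}" using \<open>finite S\<close> by auto
  moreover have "{Min S..Max S} \<subseteq> S"
    using convex [OF Min_in [OF \<open>finite S\<close> False] Max_in [OF \<open>finite S\<close> False]] by auto
  ultimately have "S = {Min S..Max S}" by blast
  then show ?thesis by blast
qed

lemma ex_atLeastAtMost_eq_Int_atLeastLessThan: "\<exists>a b. {lo..hi} \<inter> {l..<r} = {a..b::nat}"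
proof (cases "r = 0")
  case True
  then have "{lo..hi} \<inter> {l..<r} = {1..0}" by simp
  then show ?thesis by blast
next
  case False
  then have "{lo..hi} \<inter> {l..<r} = {max lo l..min hi (r - 1)}" by auto
  then show ?thesis by blast
qed

lemma interval_family_append:
  assumes I: "interval_family m I" "\<forall>i<m. I i \<subseteq> {..<K}"
    and I': "interval_family m' I'" "\<forall>i<m'. I' i \<subseteq> {K..}"
  shows "interval_family (m + m') (\<lambda>i. if i < m then I i else I' (i - m))"
  unfolding interval_family_def
proof (intro conjI allI impI)
  fix i assume "i < m + m'"
  then show "\<exists>a b. (if i < m then I i else I' (i - m)) = {a..b}"
    using I(1) I'(1) unfolding interval_family_def by auto
next
  fix i j assume i: "i < m + m'" and j: "j < m + m'" and "i \<noteq> j"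
  have sep: "A \<inter> B = {}" if "A \<subseteq> {..<K}" "B \<subseteq> {K..}" for A B :: "nat set"
    using that by (auto simp: subset_iff not_less[symmetric])
  show "(if i < m then I i else I' (i - m)) \<inter> (if j < m then I j else I' (j - m)) = {}"
  proof (cases "i < m"; cases "j < m")
    assume "i < m" "j < m"
    then show ?thesis using I(1) \<open>i \<noteq> j\<close> by (simp add: interval_family_def)
  next
    assume "i < m" "\<not> j < m"
    moreover have "j - m < m'" using j \<open>\<not> j < m\<close> by linarith
    ultimately show ?thesis using sep[of "I i" "I' (j - m)"] I(2) I'(2) by simp
  next
    assume "\<not> i < m" "j < m"
    moreover have "i - m < m'" using i \<open>\<not> i < m\<close> by linarith
    ultimately show ?thesis using sep[of "I j" "I' (i - m)"] I(2) I'(2) by (simp add: inf_commute)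
  next
    assume "\<not> i < m" "\<not> j < m"
    moreover have "i - m < m'" "j - m < m'" "i - m \<noteq> j - m"
      using i j \<open>i \<noteq> j\<close> calculation by linarith+
    ultimately show ?thesis using I'(1) unfolding interval_family_def by simp
  qed
qed

lemma james_sum_append:
  "james_sum u (m + m') (\<lambda>i. if i < m then I i else I' (i - m)) = james_sum u m I + james_sum u m' I'"
  by (induction m') (auto simp: james_sum_def)

definition seq_tail :: "nat \<Rightarrow> (nat \<Rightarrow> real) \<Rightarrow> nat \<Rightarrow> real" where
  "seq_tail M u = (\<lambda>k. if M \<le> k then u k else 0)"

lemma james_sum_seq_tail:
  assumes "interval_family m I"
  shows "james_sum (seq_tail M u) m I = james_sum u m (\<lambda>i. I i \<inter> {M..})"
  unfolding james_sum_def
proof (rule sum.cong [OF refl])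
  fix i assume "i \<in> {..<m}"
  then have "finite (I i)" using assms interval_family_finite by blast
  then show "(\<Sum>k\<in>I i. seq_tail M u k)\<^sup>2 = (\<Sum>k\<in>I i \<inter> {M..}. u k)\<^sup>2"
    by (simp add: seq_tail_def sum.inter_restrict)
qed

lemma james_sums_nonempty: "james_sums u \<noteq> {}"
  unfolding james_sums_eq using interval_family_0 by blast

lemma sqrt_james_sum_le_jnorm:
  assumes "u \<in> James" "interval_family m I"
  shows "sqrt (james_sum u m I) \<le> jnorm u"
  unfolding jnorm_def using assms by (intro cSup_upper) (auto simp: James_def james_sums_eq)

lemma james_sum_le_jnorm_sq: "u \<in> James \<Longrightarrow> interval_family m I \<Longrightarrow> james_sum u m I \<le> (jnorm u)\<^sup>2"
  using sqrt_james_sum_le_jnorm sqrt_le_D by blast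

lemma jnorm_nonneg: "u \<in> James \<Longrightarrow> 0 \<le> jnorm u"
  using sqrt_james_sum_le_jnorm [of u 0] by (simp add: james_sum_def)

lemma James_jnorm_leI:
  assumes "0 \<le> M" and "\<And>m I. interval_family m I \<Longrightarrow> james_sum u m I \<le> M\<^sup>2"
  shows "u \<in> James \<and> jnorm u \<le> M"
proof -
  have "s \<le> M" if "s \<in> james_sums u" for s
    using that assms real_sqrt_le_mono [of _ "M\<^sup>2"] by (fastforce simp: james_sums_eq)
  then show ?thesis
    unfolding James_def jnorm_def bdd_above_def using james_sums_nonempty by (auto intro: cSup_least)
qed

lemma James_jnorm_le_dominated:
  assumes v: "v \<in> James" and "0 \<le> K"
    and dom: "\<And>m I. interval_family m I \<Longrightarrow>
      \<exists>m' I'. interval_family m' I' \<and> james_sum u m I \<le> K\<^sup>2 * james_sum v m' I'"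
  shows "u \<in> James \<and> jnorm u \<le> K * jnorm v"
proof (rule James_jnorm_leI)
  show "0 \<le> K * jnorm v" using \<open>0 \<le> K\<close> jnorm_nonneg [OF v] by simp
next
  fix m I assume "interval_family m I"
  then obtain m' I' where I': "interval_family m' I'" and le: "james_sum u m I \<le> K\<^sup>2 * james_sum v m' I'"
    using dom by blast
  have "K\<^sup>2 * james_sum v m' I' \<le> K\<^sup>2 * (jnorm v)\<^sup>2"
    using james_sum_le_jnorm_sq [OF v I'] by (rule mult_left_mono) simp
  with le show "james_sum u m I \<le> (K * jnorm v)\<^sup>2"
    by (simp add: power_mult_distrib)
qed

lemma james_sum_near_jnorm:
  assumes u: "u \<in> James" and "0 < \<delta>"
  obtains m I where "interval_family m I" "(jnorm u)\<^sup>2 - \<delta> < james_sum u m I"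
proof (cases "(jnorm u)\<^sup>2 - \<delta> < 0")
  case True
  then show ?thesis using that [of 0] by (simp add: james_sum_def)
next
  case False
  have "sqrt ((jnorm u)\<^sup>2 - \<delta>) < sqrt ((jnorm u)\<^sup>2)"
    using \<open>0 < \<delta>\<close> by (simp only: real_sqrt_less_iff)
  then have "sqrt ((jnorm u)\<^sup>2 - \<delta>) < jnorm u"
    using jnorm_nonneg [OF u] by simp
  then obtain s where "s \<in> james_sums u" "sqrt ((jnorm u)\<^sup>2 - \<delta>) < s"
    unfolding jnorm_def using less_cSupD [OF james_sums_nonempty] by blast
  then show ?thesis using that by (auto simp: james_sums_eq)
qed

text \<open>A family nearly attaining the norm of \<open>u\<close> lives below some \<open>K\<close>; any family beyond \<open>K\<close>
  can be appended to it, so the tails of \<open>u\<close> beyond \<open>K\<close> have small norm.\<close>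

lemma jnorm_seq_tail_eventually_le:
  assumes u: "u \<in> James" and "0 < \<epsilon>"
  shows "\<exists>K. \<forall>M\<ge>K. jnorm (seq_tail M u) \<le> \<epsilon>"
proof -
  obtain m I where I: "interval_family m I" "(jnorm u)\<^sup>2 - \<epsilon>\<^sup>2 < james_sum u m I"
    using james_sum_near_jnorm [OF u] \<open>0 < \<epsilon>\<close> by (metis zero_less_power2 less_irrefl)
  obtain K where K: "\<forall>i<m. I i \<subseteq> {..<K}"
    using interval_family_bounded [OF I(1)] by blast
  have "jnorm (seq_tail M u) \<le> \<epsilon>" if "K \<le> M" for M
  proof -
    have "james_sum (seq_tail M u) m' I' \<le> \<epsilon>\<^sup>2" if I': "interval_family m' I'" for m' I'
    proof -
      let ?J = "\<lambda>i. I' i \<inter> {M..}"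
      have "interval_family m' ?J" "\<forall>i<m'. ?J i \<subseteq> {K..}"
        using interval_family_Int_atLeast [OF I'] \<open>K \<le> M\<close> by auto
      then have "james_sum u m I + james_sum u m' ?J \<le> (jnorm u)\<^sup>2"
        using james_sum_le_jnorm_sq [OF u interval_family_append [OF I(1) K]]
        by (simp add: james_sum_append)
      then show ?thesis using I(2) james_sum_seq_tail [OF I'] by simp
    qed
    then show ?thesis using James_jnorm_leI \<open>0 < \<epsilon>\<close> by simp
  qed
  then show ?thesis by blast
qed

lemma abs_le_jnorm:
  assumes "u \<in> James"
  shows "\<bar>u k\<bar> \<le> jnorm u"
proof -
  have "interval_family 1 (\<lambda>_. {k..k})"
    by (auto simp: interval_family_def simp del: atLeastAtMost_singleton)
  from sqrt_james_sum_le_jnorm [OF assms this] show ?thesis by (simp add: james_sum_def)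
qed

lemma sum_squares_le_jnorm_sq:
  assumes "u \<in> James"
  shows "(\<Sum>k<K. (u k)\<^sup>2) \<le> (jnorm u)\<^sup>2"
proof -
  have "interval_family K (\<lambda>k. {k..k})"
    by (auto simp: interval_family_def simp del: atLeastAtMost_singleton)
  from james_sum_le_jnorm_sq [OF assms this] show ?thesis by (simp add: james_sum_def)
qed

lemma James_eq_zero_if_jnorm_le_0: "u \<in> James \<Longrightarrow> jnorm u \<le> 0 \<Longrightarrow> u = (\<lambda>_. 0)"
  by (rule ext) (metis abs_le_jnorm abs_le_zero_iff order_trans)

lemma James_jnorm_add:
  assumes u: "u \<in> James" and v: "v \<in> James"
  shows "(\<lambda>k. u k + v k) \<in> James \<and> jnorm (\<lambda>k. u k + v k) \<le> jnorm u + jnorm v"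
proof (rule James_jnorm_leI)
  show "0 \<le> jnorm u + jnorm v" using jnorm_nonneg u v by simp
next
  fix m I assume I: "interval_family m I"
  have "sqrt (james_sum (\<lambda>k. u k + v k) m I) \<le> sqrt (james_sum u m I) + sqrt (james_sum v m I)"
    unfolding sqrt_james_sum_eq_L2_set sum.distrib by (rule L2_set_triangle_ineq)
  also have "\<dots> \<le> jnorm u + jnorm v"
    using sqrt_james_sum_le_jnorm [OF _ I] u v by (simp add: add_mono)
  finally show "james_sum (\<lambda>k. u k + v k) m I \<le> (jnorm u + jnorm v)\<^sup>2"
    by (rule sqrt_le_D)
qed

lemma James_jnorm_scale:
  assumes "u \<in> James"
  shows "(\<lambda>k. r * u k) \<in> James \<and> jnorm (\<lambda>k. r * u k) \<le> \<bar>r\<bar> * jnorm u"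
proof (rule James_jnorm_le_dominated [OF assms abs_ge_zero])
  fix m I assume "interval_family m I"
  moreover have "james_sum (\<lambda>k. r * u k) m I = \<bar>r\<bar>\<^sup>2 * james_sum u m I"
    by (simp add: james_sum_def power_mult_distrib sum_distrib_left [symmetric])
  ultimately show "\<exists>m' I'. interval_family m' I' \<and>
      james_sum (\<lambda>k. r * u k) m I \<le> \<bar>r\<bar>\<^sup>2 * james_sum u m' I'"
    by auto
qed

lemma James_jnorm_diff:
  assumes u: "u \<in> James" and v: "v \<in> James"
  shows "(\<lambda>k. u k - v k) \<in> James \<and> jnorm (\<lambda>k. u k - v k) \<le> jnorm u + jnorm v"
  using James_jnorm_add [OF u conjunct1 [OF James_jnorm_scale [OF v, of "-1"]]]
    James_jnorm_scale [OF v, of "-1"] by simp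

lemma seq_tail_James:
  assumes "u \<in> James"
  shows "seq_tail M u \<in> James \<and> jnorm (seq_tail M u) \<le> jnorm u"
proof -
  have "seq_tail M u \<in> James \<and> jnorm (seq_tail M u) \<le> 1 * jnorm u"
  proof (rule James_jnorm_le_dominated [OF assms])
    fix m I assume I: "interval_family m I"
    then show "\<exists>m' I'. interval_family m' I' \<and> james_sum (seq_tail M u) m I \<le> 1\<^sup>2 * james_sum u m' I'"
      using interval_family_Int_atLeast [OF I] james_sum_seq_tail [OF I] by auto
  qed simp
  then show ?thesis by simp
qed

lemma James_jnorm_le_by_truncations:
  assumes "0 \<le> M"
    and approx: "\<And>K. \<exists>w\<in>James. jnorm w \<le> M \<and> (\<forall>k<K. w k = u k)"
  shows "u \<in> James \<and> jnorm u \<le> M"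
proof (rule James_jnorm_leI [OF \<open>0 \<le> M\<close>])
  fix m I assume I: "interval_family m I"
  obtain K where K: "\<forall>i<m. I i \<subseteq> {..<K}" using interval_family_bounded [OF I] by blast
  obtain w where w: "w \<in> James" "jnorm w \<le> M" "\<forall>k<K. w k = u k" using approx by blast
  have "(\<Sum>k\<in>I i. u k) = (\<Sum>k\<in>I i. w k)" if "i < m" for i
    using K w(3) that by (intro sum.cong refl) (metis lessThan_iff subsetD)
  then have "james_sum u m I = james_sum w m I" by (simp add: james_sum_def)
  also have "\<dots> \<le> (jnorm w)\<^sup>2" using james_sum_le_jnorm_sq [OF w(1) I] .
  also have "\<dots> \<le> M\<^sup>2" using w(2) jnorm_nonneg [OF w(1)] by (simp add: power_mono)
  finally show "james_sum u m I \<le> M\<^sup>2" .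
qed

section \<open>Finite linear combinations\<close>

lemma lincomb_unit_vec: "lincomb a unit_vec N k = (if k < N then a k else 0)"
  by (simp add: lincomb_def unit_vec_def if_distrib [of "\<lambda>t. _ * t"] sum.delta' cong: if_cong)

lemma unit_vec_James: "unit_vec n \<in> James \<and> jnorm (unit_vec n) \<le> 1"
proof (rule James_jnorm_leI)
  fix m I assume I: "interval_family m I"
  have "(\<Sum>k\<in>I i. unit_vec n k)\<^sup>2 = of_bool (n \<in> I i)" if "i < m" for i
    using interval_family_finite [OF I that] by (simp add: unit_vec_def sum.delta)
  then have "james_sum (unit_vec n) m I = real (card ({..<m} \<inter> {i. n \<in> I i}))"
    by (simp add: james_sum_def)
  moreover have "card ({..<m} \<inter> {i. n \<in> I i}) \<le> Suc 0"
    using I unfolding interval_family_def by (subst card_le_Suc0_iff_eq) blast+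
  ultimately show "james_sum (unit_vec n) m I \<le> 1\<^sup>2" by simp
qed simp

lemma lincomb_James:
  assumes "\<And>n. n < N \<Longrightarrow> y n \<in> James"
  shows "lincomb a y N \<in> James \<and> jnorm (lincomb a y N) \<le> (\<Sum>n<N. \<bar>a n\<bar> * jnorm (y n))"
  using assms
proof (induction N)
  case 0
  have "lincomb a y 0 = (\<lambda>k. 0 * unit_vec 0 k)" by (simp add: lincomb_def)
  then show ?case using James_jnorm_scale [of "unit_vec 0" 0] unit_vec_James by simp
next
  case (Suc N)
  have split: "lincomb a y (Suc N) = (\<lambda>k. lincomb a y N k + a N * y N k)"
    by (simp add: lincomb_def)
  have "lincomb a y N \<in> James \<and> jnorm (lincomb a y N) \<le> (\<Sum>n<N. \<bar>a n\<bar> * jnorm (y n))"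
    using Suc by simp
  moreover have "(\<lambda>k. a N * y N k) \<in> James \<and> jnorm (\<lambda>k. a N * y N k) \<le> \<bar>a N\<bar> * jnorm (y N)"
    using James_jnorm_scale Suc.prems by simp
  ultimately show ?case
    unfolding split using James_jnorm_add [of "lincomb a y N" "\<lambda>k. a N * y N k"] by auto
qed

lemma lincomb_unit_vec_James:
  "lincomb a unit_vec N \<in> James \<and> jnorm (lincomb a unit_vec N) \<le> (\<Sum>n<N. \<bar>a n\<bar>)"
proof -
  have "(\<Sum>n<N. \<bar>a n\<bar> * jnorm (unit_vec n)) \<le> (\<Sum>n<N. \<bar>a n\<bar>)"
    using unit_vec_James by (intro sum_mono) (simp add: mult_left_le)
  then show ?thesis using lincomb_James [of N unit_vec a] unit_vec_James by fastforce
qed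

lemma card_le_jnorm_indicator:
  assumes "F \<subseteq> {..<N}"
  shows "real (card F) \<le> jnorm (lincomb (\<lambda>n. of_bool (n \<in> F)) unit_vec N)"
proof -
  let ?v = "lincomb (\<lambda>n. of_bool (n \<in> F)) unit_vec N"
  have "interval_family 1 (\<lambda>_. {0..N})" by (auto simp: interval_family_def)
  then have "sqrt (james_sum ?v 1 (\<lambda>_. {0..N})) \<le> jnorm ?v"
    using sqrt_james_sum_le_jnorm lincomb_unit_vec_James by blast
  moreover have "(\<Sum>k\<in>{0..N}. ?v k) = (\<Sum>k\<in>{0..N}. of_bool (k \<in> F))"
    using assms by (intro sum.cong) (auto simp: lincomb_unit_vec)
  moreover have "{0..N} \<inter> F = F" using assms by auto
  ultimately show ?thesis by (simp add: james_sum_def)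
qed

section \<open>Block sequences equivalent to the unit vector basis\<close>

locale equivalent_block_basis =
  fixes x :: "nat \<Rightarrow> nat \<Rightarrow> real" and c C :: real
  assumes block_seq: "block_sequence x"
    and c_pos: "0 < c" and C_pos: "0 < C"
    and lower_estimate: "\<And>a N. c * jnorm (lincomb a unit_vec N) \<le> jnorm (lincomb a x N)"
    and upper_estimate: "\<And>a N. jnorm (lincomb a x N) \<le> C * jnorm (lincomb a unit_vec N)"
begin

definition p :: "nat \<Rightarrow> nat" where "p n = Min (supp (x n))"
definition q :: "nat \<Rightarrow> nat" where "q n = Max (supp (x n))"
definition block_sum :: "nat \<Rightarrow> real" where "block_sum n = (\<Sum>k\<in>{p n..q n}. x n k)"

lemma finite_supp: "finite (supp (x n))"
  using block_seq by (simp add: block_sequence_def)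

lemma supp_nonempty: "supp (x n) \<noteq> {}"
proof
  assume "supp (x n) = {}"
  then have "x n = (\<lambda>_. 0)" by (auto simp: supp_def)
  then show False using block_seq by (simp add: block_sequence_def)
qed

lemma p_le_q: "p n \<le> q n"
  unfolding p_def q_def using finite_supp supp_nonempty by simp

lemma q_less_p_Suc: "q n < p (Suc n)"
  using block_seq by (simp add: block_sequence_def p_def q_def)

lemma strict_mono_p: "strict_mono p"
  unfolding strict_mono_Suc_iff using p_le_q q_less_p_Suc order.strict_trans1 by blast

lemma q_less_p:
  assumes "m < n"
  shows "q m < p n"
proof -
  have "p (Suc m) \<le> p n" using assms strict_mono_leD [OF strict_mono_p] by simp
  then show ?thesis using q_less_p_Suc [of m] by linarith
qed

lemma q_mono: "m \<le> n \<Longrightarrow> q m \<le> q n"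
  using q_less_p [of m n] p_le_q [of n] by (cases "m = n") auto

lemma le_p: "n \<le> p n"
  using strict_mono_imp_increasing [OF strict_mono_p] .

lemma x_eq_0_outside:
  assumes "k \<notin> {p n..q n}"
  shows "x n k = 0"
proof (rule ccontr)
  assume "x n k \<noteq> 0"
  then have "k \<in> supp (x n)" by (simp add: supp_def)
  then have "k \<in> {p n..q n}" unfolding p_def q_def using finite_supp by (auto intro: Min_le Max_ge)
  with assms show False by contradiction
qed

lemma sum_sq_x_pos: "0 < (\<Sum>k\<in>{p n..q n}. (x n k)\<^sup>2)"
proof -
  obtain k where "k \<in> supp (x n)" using supp_nonempty by blast
  then have "k \<in> {p n..q n}" "x n k \<noteq> 0"
    unfolding p_def q_def using finite_supp by (auto simp: supp_def intro: Min_le Max_ge)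
  then show ?thesis by (intro sum_pos2 [of _ k]) auto
qed

lemma x_eq_0_below: "k < n \<Longrightarrow> x n k = 0"
  using le_p [of n] x_eq_0_outside by simp

lemma blocks_disjoint: "m \<noteq> n \<Longrightarrow> {p m..q m} \<inter> {p n..q n} = {}"
  using q_less_p [of m n] q_less_p [of n m] by (cases "m < n") auto

lemma sum_x_covering: "finite A \<Longrightarrow> {p n..q n} \<subseteq> A \<Longrightarrow> (\<Sum>k\<in>A. x n k) = block_sum n"
  unfolding block_sum_def using x_eq_0_outside by (intro sum.mono_neutral_right) auto

lemma sum_x_disjoint: "{p n..q n} \<inter> A = {} \<Longrightarrow> (\<Sum>k\<in>A. x n k) = 0"
  using x_eq_0_outside by (intro sum.neutral) blast

lemma x_James: "x n \<in> James"
proof -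
  have "x n = lincomb (x n) unit_vec (Suc (q n))"
    using x_eq_0_outside [of _ n] by (force simp: lincomb_unit_vec)
  then show ?thesis using lincomb_unit_vec_James [of "x n" "Suc (q n)"] by simp
qed

lemma jnorm_x_le: "jnorm (x n) \<le> C"
proof -
  define a where "a m = (if m = n then 1 else 0 :: real)" for m
  have "lincomb a x (Suc n) = x n"
    by (rule ext) (simp add: lincomb_def a_def sum.delta')
  moreover have "lincomb a unit_vec (Suc n) = unit_vec n"
    by (rule ext) (simp add: lincomb_unit_vec a_def unit_vec_def)
  ultimately have "jnorm (x n) \<le> C * jnorm (unit_vec n)"
    using upper_estimate [of a "Suc n"] by simp
  also have "\<dots> \<le> C" using unit_vec_James C_pos by (simp add: mult_left_le)
  finally show ?thesis .
qed

lemma james_sum_x_le: "interval_family m I \<Longrightarrow> james_sum (x n) m I \<le> C\<^sup>2"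
  using james_sum_le_jnorm_sq [OF x_James] jnorm_x_le jnorm_nonneg [OF x_James]
  by (meson order_trans power_mono)


definition covered_blocks :: "nat \<Rightarrow> nat set \<Rightarrow> nat set" where
  "covered_blocks N I = {n\<in>{..<N}. {p n..q n} \<subseteq> I}"

definition straddling_blocks :: "nat \<Rightarrow> nat set \<Rightarrow> nat set" where
  "straddling_blocks N I = {n\<in>{..<N}. \<not> {p n..q n} \<subseteq> I \<and> {p n..q n} \<inter> I \<noteq> {}}"

lemma card_blocks_containing_le: "card {n\<in>{..<N}. k \<in> {p n..q n}} \<le> 1"
proof -
  have "m = n" if "k \<in> {p m..q m}" "k \<in> {p n..q n}" for m n
    using blocks_disjoint [of m n] that by blast
  then have "card {n\<in>{..<N}. k \<in> {p n..q n}} \<le> Suc 0"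
    by (subst card_le_Suc0_iff_eq) auto
  then show ?thesis by simp
qed

text \<open>A block straddling an interval contains one of its endpoints.\<close>

lemma card_straddling_blocks_le: "card (straddling_blocks N {lo..hi}) \<le> 2"
proof -
  let ?L = "{n\<in>{..<N}. lo \<in> {p n..q n}}" and ?H = "{n\<in>{..<N}. hi \<in> {p n..q n}}"
  have "straddling_blocks N {lo..hi} \<subseteq> ?L \<union> ?H"
  proof
    fix n assume "n \<in> straddling_blocks N {lo..hi}"
    then obtain k k' where "n < N" "k \<in> {p n..q n}" "k \<in> {lo..hi}" "k' \<in> {p n..q n}" "k' \<notin> {lo..hi}"
      unfolding straddling_blocks_def by blast
    then show "n \<in> ?L \<union> ?H" by (cases "k' < lo") auto
  qed
  then have "card (straddling_blocks N {lo..hi}) \<le> card (?L \<union> ?H)"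
    by (intro card_mono) auto
  also have "\<dots> \<le> card ?L + card ?H"
    by (rule card_Un_le)
  finally show ?thesis
    using card_blocks_containing_le [of N lo] card_blocks_containing_le [of N hi] by linarith
qed

lemma interval_sum_lincomb_eq:
  assumes "finite I"
  shows "(\<Sum>k\<in>I. lincomb a x N k) =
    (\<Sum>n\<in>covered_blocks N I. a n * block_sum n) + (\<Sum>n\<in>straddling_blocks N I. a n * (\<Sum>k\<in>I. x n k))"
proof -
  let ?F = "covered_blocks N I" and ?S = "straddling_blocks N I"
  have "(\<Sum>k\<in>I. lincomb a x N k) = (\<Sum>n<N. a n * (\<Sum>k\<in>I. x n k))"
    unfolding lincomb_def by (simp add: sum.swap [of _ I] sum_distrib_left)
  also have "\<dots> = (\<Sum>n\<in>?F \<union> ?S. a n * (\<Sum>k\<in>I. x n k))"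
  proof (rule sum.mono_neutral_right)
    show "\<forall>n\<in>{..<N} - (?F \<union> ?S). a n * (\<Sum>k\<in>I. x n k) = 0"
    proof
      fix n assume "n \<in> {..<N} - (?F \<union> ?S)"
      then have "{p n..q n} \<inter> I = {}" by (auto simp: covered_blocks_def straddling_blocks_def)
      then show "a n * (\<Sum>k\<in>I. x n k) = 0" by (simp add: sum_x_disjoint)
    qed
  qed (auto simp: covered_blocks_def straddling_blocks_def)
  also have "\<dots> = (\<Sum>n\<in>?F. a n * (\<Sum>k\<in>I. x n k)) + (\<Sum>n\<in>?S. a n * (\<Sum>k\<in>I. x n k))"
    by (rule sum.union_disjoint) (auto simp: covered_blocks_def straddling_blocks_def)
  also have "(\<Sum>n\<in>?F. a n * (\<Sum>k\<in>I. x n k)) = (\<Sum>n\<in>?F. a n * block_sum n)"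
    using assms by (intro sum.cong) (auto simp: covered_blocks_def sum_x_covering)
  finally show ?thesis .
qed

text \<open>The covered blocks contribute \<open>\<Sum> a n * block_sum n\<close> to an interval sum, and the at most
  two straddling blocks contribute the rest.\<close>

lemma interval_sum_lincomb_sq_le:
  "(\<Sum>k\<in>{lo..hi}. lincomb a x N k)\<^sup>2 \<le>
     2 * (\<Sum>n\<in>covered_blocks N {lo..hi}. a n * block_sum n)\<^sup>2
     + 4 * (\<Sum>n<N. (a n)\<^sup>2 * (\<Sum>k\<in>{lo..hi}. x n k)\<^sup>2)"
proof -
  let ?S = "straddling_blocks N {lo..hi}"
  define t where "t n = (\<Sum>k\<in>{lo..hi}. x n k)" for n
  have "(\<Sum>n\<in>?S. a n * t n)\<^sup>2 \<le> (\<Sum>n\<in>?S. (a n * t n)\<^sup>2) * card ?S"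
    by (rule sum_squared_le_sum_of_squares)
  also have "\<dots> \<le> (\<Sum>n<N. (a n * t n)\<^sup>2) * 2"
  proof (rule mult_mono)
    show "(\<Sum>n\<in>?S. (a n * t n)\<^sup>2) \<le> (\<Sum>n<N. (a n * t n)\<^sup>2)"
      by (rule sum_mono2) (auto simp: straddling_blocks_def)
    show "real (card ?S) \<le> 2"
      using card_straddling_blocks_le [of N lo hi] by simp
  qed (auto intro: sum_nonneg)
  finally have straddling: "(\<Sum>n\<in>?S. a n * t n)\<^sup>2 \<le> 2 * (\<Sum>n<N. (a n)\<^sup>2 * (t n)\<^sup>2)"
    by (simp add: power_mult_distrib mult.commute)
  have "(X + Y)\<^sup>2 \<le> 2 * X\<^sup>2 + 2 * Y\<^sup>2" for X Y :: real
    using sum_squares_bound [of X Y] by (simp add: power2_sum)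
  from this [of "\<Sum>n\<in>covered_blocks N {lo..hi}. a n * block_sum n" "\<Sum>n\<in>?S. a n * t n"] straddling
  show ?thesis
    unfolding interval_sum_lincomb_eq [OF finite_atLeastAtMost] t_def by linarith
qed

lemma interval_family_covered_blocks:
  assumes I: "interval_family m I"
  shows "interval_family m (\<lambda>i. covered_blocks N (I i))"
  unfolding interval_family_def
proof (intro conjI allI impI)
  fix i assume "i < m"
  then obtain lo hi where lohi: "I i = {lo..hi}" using I unfolding interval_family_def by blast
  show "\<exists>a b. covered_blocks N (I i) = {a..b}"
  proof (rule ex_atLeastAtMost_if_convex)
    fix a b k assume a: "a \<in> covered_blocks N (I i)" and b: "b \<in> covered_blocks N (I i)"
      and "a \<le> k" "k \<le> b"
    then have "p a \<le> p k" "q k \<le> q b" "k < N"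
      using strict_mono_leD [OF strict_mono_p] q_mono by (auto simp: covered_blocks_def)
    moreover have "lo \<le> p a" "q b \<le> hi"
      using a b p_le_q [of a] p_le_q [of b] lohi by (auto simp: covered_blocks_def)
    ultimately show "k \<in> covered_blocks N (I i)" using lohi by (auto simp: covered_blocks_def)
  qed (simp add: covered_blocks_def)
next
  fix i j assume "i < m" "j < m" "i \<noteq> j"
  then have "I i \<inter> I j = {}" using I unfolding interval_family_def by blast
  moreover have "p n \<in> {p n..q n}" for n using p_le_q [of n] by simp
  ultimately show "covered_blocks N (I i) \<inter> covered_blocks N (I j) = {}"
    unfolding covered_blocks_def by blast
qed

lemma james_sum_lincomb_le:
  assumes I: "interval_family m I"
  shows "james_sum (lincomb a x N) m I \<le>
    2 * (jnorm (lincomb (\<lambda>n. a n * block_sum n) unit_vec N))\<^sup>2 + 4 * C\<^sup>2 * (\<Sum>n<N. (a n)\<^sup>2)"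
proof -
  define F where "F i = covered_blocks N (I i)" for i
  define w where "w = lincomb (\<lambda>n. a n * block_sum n) unit_vec N"
  have "(\<Sum>k\<in>I i. lincomb a x N k)\<^sup>2 \<le>
      2 * (\<Sum>n\<in>F i. w n)\<^sup>2 + 4 * (\<Sum>n<N. (a n)\<^sup>2 * (\<Sum>k\<in>I i. x n k)\<^sup>2)" if "i < m" for i
  proof -
    obtain lo hi where "I i = {lo..hi}" using I \<open>i < m\<close> unfolding interval_family_def by blast
    moreover have "(\<Sum>n\<in>F i. w n) = (\<Sum>n\<in>F i. a n * block_sum n)"
      by (intro sum.cong) (auto simp: w_def F_def covered_blocks_def lincomb_unit_vec)
    ultimately show ?thesis unfolding F_def using interval_sum_lincomb_sq_le by simp
  qed
  then have "james_sum (lincomb a x N) m I \<le>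
      (\<Sum>i<m. 2 * (\<Sum>n\<in>F i. w n)\<^sup>2 + 4 * (\<Sum>n<N. (a n)\<^sup>2 * (\<Sum>k\<in>I i. x n k)\<^sup>2))"
    unfolding james_sum_def by (intro sum_mono) simp
  also have "\<dots> = 2 * james_sum w m F + 4 * (\<Sum>n<N. (a n)\<^sup>2 * james_sum (x n) m I)"
    by (simp add: james_sum_def sum.distrib sum_distrib_left sum.swap [of _ "{..<m}"])
  also have "james_sum w m F \<le> (jnorm w)\<^sup>2"
    unfolding F_def w_def
    using james_sum_le_jnorm_sq [OF conjunct1 [OF lincomb_unit_vec_James] interval_family_covered_blocks [OF I]] .
  also have "(\<Sum>n<N. (a n)\<^sup>2 * james_sum (x n) m I) \<le> (\<Sum>n<N. (a n)\<^sup>2 * C\<^sup>2)"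
    using james_sum_x_le [OF I] by (intro sum_mono mult_left_mono) auto
  finally show ?thesis unfolding w_def by (simp add: sum_distrib_left mult_ac)
qed

lemma jnorm_lincomb_sq_le:
  "(jnorm (lincomb a x N))\<^sup>2 \<le>
    2 * (jnorm (lincomb (\<lambda>n. a n * block_sum n) unit_vec N))\<^sup>2 + 4 * C\<^sup>2 * (\<Sum>n<N. (a n)\<^sup>2)"
proof -
  let ?R = "2 * (jnorm (lincomb (\<lambda>n. a n * block_sum n) unit_vec N))\<^sup>2 + 4 * C\<^sup>2 * (\<Sum>n<N. (a n)\<^sup>2)"
  have "0 \<le> ?R" by (intro add_nonneg_nonneg mult_nonneg_nonneg sum_nonneg) auto
  then have "jnorm (lincomb a x N) \<le> sqrt ?R"
    using James_jnorm_leI [of "sqrt ?R"] james_sum_lincomb_le by simp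
  moreover have "0 \<le> jnorm (lincomb a x N)"
    using jnorm_nonneg lincomb_James x_James by blast
  ultimately have "(jnorm (lincomb a x N))\<^sup>2 \<le> (sqrt ?R)\<^sup>2"
    by (rule power_mono)
  then show ?thesis using \<open>0 \<le> ?R\<close> by simp
qed

lemma jnorm_small_block_sums_le:
  assumes N: "F \<subseteq> {..<N}" and small: "\<And>n. n \<in> F \<Longrightarrow> \<bar>block_sum n\<bar> < c / 2"
  shows "jnorm (lincomb (\<lambda>n. of_bool (n \<in> F) * block_sum n) unit_vec N) \<le> real (card F) * (c / 2)"
proof -
  have "jnorm (lincomb (\<lambda>n. of_bool (n \<in> F) * block_sum n) unit_vec N) \<le>
      (\<Sum>n<N. \<bar>of_bool (n \<in> F) * block_sum n\<bar>)"
    using lincomb_unit_vec_James by blast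
  also have "\<dots> = (\<Sum>n\<in>F. \<bar>block_sum n\<bar>)"
    using N by (simp add: abs_mult Int_absorb1)
  also have "\<dots> \<le> (\<Sum>n\<in>F. c / 2)"
    using small by (intro sum_mono) (simp add: less_imp_le)
  finally show ?thesis by simp
qed

text \<open>Testing \<open>\<Sum>\<^sub>n\<^sub>\<in>\<^sub>F x n\<close> against the lower estimate and \<open>jnorm_lincomb_sq_le\<close> gives
  \<open>c\<^sup>2 |F|\<^sup>2 \<le> c\<^sup>2 |F|\<^sup>2 / 2 + 4 C\<^sup>2 |F|\<close>.\<close>

lemma card_small_block_sums_le:
  assumes "finite F" and small: "\<And>n. n \<in> F \<Longrightarrow> \<bar>block_sum n\<bar> < c / 2"
  shows "real (card F) \<le> 8 * C\<^sup>2 / c\<^sup>2"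
proof -
  obtain N where N: "F \<subseteq> {..<N}" using \<open>finite F\<close> finite_nat_iff_bounded by blast
  define a where "a n = (of_bool (n \<in> F) :: real)" for n
  define k where "k = real (card F)"
  define J where "J = jnorm (lincomb (\<lambda>n. a n * block_sum n) unit_vec N)"
  have "c * k \<le> jnorm (lincomb a x N)"
    using card_le_jnorm_indicator [OF N] lower_estimate [of a N] c_pos
    unfolding a_def k_def by (meson mult_left_mono less_imp_le order_trans)
  then have "(c * k)\<^sup>2 \<le> (jnorm (lincomb a x N))\<^sup>2"
    using c_pos by (intro power_mono) (auto simp: k_def)
  also have "\<dots> \<le> 2 * J\<^sup>2 + 4 * C\<^sup>2 * k"
  proof -
    have "(\<Sum>n<N. (a n)\<^sup>2) = (\<Sum>n<N. of_bool (n \<in> F))"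
      by (intro sum.cong) (auto simp: a_def)
    also have "\<dots> = k" using N by (simp add: k_def Int_absorb1)
    finally show ?thesis using jnorm_lincomb_sq_le [of a N] by (simp add: J_def)
  qed
  finally have "(c * k)\<^sup>2 \<le> 2 * J\<^sup>2 + 4 * C\<^sup>2 * k" .
  moreover have "J\<^sup>2 \<le> (k * (c / 2))\<^sup>2"
    using jnorm_small_block_sums_le [OF N small] jnorm_nonneg lincomb_unit_vec_James
    unfolding J_def a_def k_def by (intro power_mono) blast+
  moreover have "(c * k)\<^sup>2 = c\<^sup>2 * k\<^sup>2" "(k * (c / 2))\<^sup>2 = c\<^sup>2 * k\<^sup>2 / 4"
    by (simp_all add: power_mult_distrib power_divide)
  ultimately have "(c\<^sup>2 * k) * k \<le> (8 * C\<^sup>2) * k"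
    by (simp add: power2_eq_square [of k] mult.assoc)
  moreover have "0 \<le> k" by (simp add: k_def)
  ultimately have "c\<^sup>2 * k \<le> 8 * C\<^sup>2"
    using C_pos by (cases "k = 0") (auto dest: mult_right_le_imp_le)
  then show ?thesis
    using c_pos by (simp add: k_def pos_le_divide_eq mult.commute)
qed

lemma finite_small_block_sums: "finite {n. \<bar>block_sum n\<bar> < c / 2}"
proof (rule ccontr)
  assume "infinite {n. \<bar>block_sum n\<bar> < c / 2}"
  moreover obtain r :: nat where "8 * C\<^sup>2 / c\<^sup>2 < r" using reals_Archimedean2 by blast
  ultimately obtain F where "F \<subseteq> {n. \<bar>block_sum n\<bar> < c / 2}" "finite F" "card F = r"
    using infinite_arbitrarily_large by blast
  then show False using card_small_block_sums_le [of F] \<open>8 * C\<^sup>2 / c\<^sup>2 < r\<close> by auto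
qed

lemma eventually_large_block_sums: "\<exists>N0. \<forall>n\<ge>N0. c / 2 \<le> \<bar>block_sum n\<bar>"
proof -
  obtain N0 where N0: "\<forall>n\<in>{n. \<bar>block_sum n\<bar> < c / 2}. n < N0"
    using finite_small_block_sums finite_nat_set_iff_bounded by blast
  have "c / 2 \<le> \<bar>block_sum n\<bar>" if "N0 \<le> n" for n
  proof (rule ccontr)
    assume "\<not> c / 2 \<le> \<bar>block_sum n\<bar>"
    then have "n < N0" using N0 by simp
    with that show False by simp
  qed
  then show ?thesis by blast
qed

lemma sum_sq_coeffs_le:
  assumes large: "\<And>n. n < N \<Longrightarrow> a n \<noteq> 0 \<Longrightarrow> c / 2 \<le> \<bar>block_sum n\<bar>"
  shows "(\<Sum>n<N. (a n)\<^sup>2) \<le> 4 / c\<^sup>2 * (jnorm (lincomb (\<lambda>n. a n * block_sum n) unit_vec N))\<^sup>2"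
proof -
  have "(a n)\<^sup>2 \<le> 4 / c\<^sup>2 * (a n * block_sum n)\<^sup>2" if "n < N" for n
  proof (cases "a n = 0")
    case False
    then have "(c / 2)\<^sup>2 \<le> (block_sum n)\<^sup>2"
      using large [OF that] c_pos by (metis abs_le_square_iff abs_of_pos half_gt_zero)
    then have "c\<^sup>2 * (a n)\<^sup>2 \<le> 4 * (block_sum n)\<^sup>2 * (a n)\<^sup>2"
      by (intro mult_right_mono) (simp_all add: power_divide)
    then show ?thesis using c_pos by (simp add: field_simps power_mult_distrib)
  qed simp
  then have "(\<Sum>n<N. (a n)\<^sup>2) \<le> 4 / c\<^sup>2 * (\<Sum>n<N. (a n * block_sum n)\<^sup>2)"
    unfolding sum_distrib_left by (intro sum_mono) simp
  moreover have "(\<Sum>n<N. (a n * block_sum n)\<^sup>2) \<le> (jnorm (lincomb (\<lambda>n. a n * block_sum n) unit_vec N))\<^sup>2"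
    using sum_squares_le_jnorm_sq [OF conjunct1 [OF lincomb_unit_vec_James], of "\<lambda>n. a n * block_sum n" N N]
    by (simp add: lincomb_unit_vec)
  ultimately show ?thesis
    by (meson mult_left_mono order_trans zero_le_divide_iff zero_le_numeral zero_le_power2)
qed

lemma jnorm_lincomb_large_block_sums_le:
  assumes large: "\<And>n. n < N \<Longrightarrow> a n \<noteq> 0 \<Longrightarrow> c / 2 \<le> \<bar>block_sum n\<bar>"
  shows "c * jnorm (lincomb a unit_vec N) \<le>
    sqrt (2 + 16 * C\<^sup>2 / c\<^sup>2) * jnorm (lincomb (\<lambda>n. a n * block_sum n) unit_vec N)"
proof -
  define g where "g = jnorm (lincomb (\<lambda>n. a n * block_sum n) unit_vec N)"
  have g: "0 \<le> g" unfolding g_def using jnorm_nonneg lincomb_unit_vec_James by blast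
  have "4 * C\<^sup>2 * (\<Sum>n<N. (a n)\<^sup>2) \<le> 4 * C\<^sup>2 * (4 / c\<^sup>2 * g\<^sup>2)"
    using sum_sq_coeffs_le [OF large] unfolding g_def by (rule mult_left_mono) auto
  then have "(jnorm (lincomb a x N))\<^sup>2 \<le> 2 * g\<^sup>2 + 4 * C\<^sup>2 * (4 / c\<^sup>2 * g\<^sup>2)"
    using jnorm_lincomb_sq_le [of a N] unfolding g_def by linarith
  also have "\<dots> = (2 + 16 * C\<^sup>2 / c\<^sup>2) * g\<^sup>2"
    by (simp add: algebra_simps)
  finally have "(jnorm (lincomb a x N))\<^sup>2 \<le> (2 + 16 * C\<^sup>2 / c\<^sup>2) * g\<^sup>2" .
  moreover have "(c * jnorm (lincomb a unit_vec N))\<^sup>2 \<le> (jnorm (lincomb a x N))\<^sup>2"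
    using lower_estimate [of a N] c_pos jnorm_nonneg lincomb_unit_vec_James
    by (intro power_mono) auto
  ultimately have "c * jnorm (lincomb a unit_vec N) \<le> sqrt ((2 + 16 * C\<^sup>2 / c\<^sup>2) * g\<^sup>2)"
    by (intro real_le_rsqrt) linarith
  also have "\<dots> = sqrt (2 + 16 * C\<^sup>2 / c\<^sup>2) * g"
    using g by (simp add: real_sqrt_mult)
  finally show ?thesis unfolding g_def .
qed

definition window :: "nat \<Rightarrow> nat set" where "window n = {p n..<p (Suc n)}"

definition window_sum :: "(nat \<Rightarrow> real) \<Rightarrow> nat \<Rightarrow> real" where
  "window_sum u n = (\<Sum>k\<in>window n. u k)"

lemma block_subset_window: "{p n..q n} \<subseteq> window n"
  using q_less_p_Suc [of n] by (auto simp: window_def)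

lemma window_subset_atLeast: "N \<le> n \<Longrightarrow> window n \<subseteq> {p N..}"
  using strict_mono_leD [OF strict_mono_p] by (force simp: window_def)

lemma window_subset_lessThan: "n < N \<Longrightarrow> window n \<subseteq> {..<p N}"
  using strict_mono_leD [OF strict_mono_p, of "Suc n" N] by (auto simp: window_def)

lemma windows_disjoint:
  assumes "m \<noteq> n"
  shows "window m \<inter> window n = {}"
proof (cases "m < n")
  case True
  then show ?thesis using window_subset_lessThan [of m n] window_subset_atLeast [of n n]
    by (auto simp: subset_iff not_less [symmetric])
next
  case False
  then show ?thesis using assms window_subset_lessThan [of n m] window_subset_atLeast [of m m]
    by (auto simp: subset_iff not_less [symmetric])
qed

lemma block_window_disjoint: "m \<noteq> n \<Longrightarrow> {p m..q m} \<inter> window n = {}"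
  using block_subset_window windows_disjoint by blast

lemma UN_window: "\<alpha> \<le> \<beta> \<Longrightarrow> (\<Union>n\<in>{\<alpha>..\<beta>}. window n) = {p \<alpha>..<p (Suc \<beta>)}"
proof (induction \<beta> rule: dec_induct)
  case base
  then show ?case by (simp add: window_def)
next
  case (step \<beta>)
  have "{\<alpha>..Suc \<beta>} = insert (Suc \<beta>) {\<alpha>..\<beta>}" using step.hyps by auto
  moreover have "p \<alpha> \<le> p (Suc \<beta>)" "p (Suc \<beta>) \<le> p (Suc (Suc \<beta>))"
    using step.hyps strict_mono_leD [OF strict_mono_p] by simp_all
  ultimately show ?case using step.IH by (auto simp: window_def)
qed

lemma interval_UN_window: "\<exists>a b. (\<Union>n\<in>{\<alpha>..\<beta>}. window n) = {a..b}"
proof (cases "\<alpha> \<le> \<beta>")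
  case True
  have "0 < p (Suc \<beta>)" using le_p [of "Suc \<beta>"] by simp
  then have "{p \<alpha>..<p (Suc \<beta>)} = {p \<alpha>..p (Suc \<beta>) - 1}" by auto
  then show ?thesis using UN_window [OF True] by metis
next
  case False
  then have "(\<Union>n\<in>{\<alpha>..\<beta>}. window n) = {1..0}" by simp
  then show ?thesis by blast
qed

lemma interval_family_UN_windows:
  assumes I: "interval_family m I"
  shows "interval_family m (\<lambda>i. \<Union>n\<in>I i \<inter> {N1..<N}. window n)"
  unfolding interval_family_def
proof (intro conjI allI impI)
  fix i assume "i < m"
  then obtain lo hi where "I i = {lo..hi}" using I unfolding interval_family_def by blast
  then have "\<exists>\<alpha> \<beta>. I i \<inter> {N1..<N} = {\<alpha>..\<beta>}"
    by (simp only: ex_atLeastAtMost_eq_Int_atLeastLessThan)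
  then show "\<exists>a b. (\<Union>n\<in>I i \<inter> {N1..<N}. window n) = {a..b}"
    using interval_UN_window by metis
next
  fix i j assume "i < m" "j < m" "i \<noteq> j"
  then have disj: "I i \<inter> I j = {}" using I unfolding interval_family_def by blast
  have "window n \<inter> window n' = {}" if "n \<in> I i" "n' \<in> I j" for n n'
  proof (rule windows_disjoint)
    show "n \<noteq> n'" using disj that by blast
  qed
  then show "(\<Union>n\<in>I i \<inter> {N1..<N}. window n) \<inter> (\<Union>n\<in>I j \<inter> {N1..<N}. window n) = {}"
    by blast
qed

lemma sum_window_sums: "finite A \<Longrightarrow> (\<Sum>n\<in>A. window_sum u n) = (\<Sum>k\<in>(\<Union>n\<in>A. window n). u k)"
  unfolding window_sum_def using windows_disjoint
  by (intro sum.UNION_disjoint [symmetric]) (auto simp: window_def)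

text \<open>A union of consecutive windows is an interval, so every interval sum of the window
  sums of \<open>u\<close> is an interval sum of \<open>u\<close>.\<close>

lemma jnorm_window_sums_le:
  assumes u: "u \<in> James"
  shows "jnorm (lincomb (\<lambda>n. if N1 \<le> n then window_sum u n else 0) unit_vec N) \<le> jnorm u"
proof -
  let ?w = "lincomb (\<lambda>n. if N1 \<le> n then window_sum u n else 0) unit_vec N"
  have "?w \<in> James \<and> jnorm ?w \<le> 1 * jnorm u"
  proof (rule James_jnorm_le_dominated [OF u])
    fix m I assume I: "interval_family m I"
    define J where "J i = (\<Union>n\<in>I i \<inter> {N1..<N}. window n)" for i
    have "(\<Sum>n\<in>I i. ?w n) = (\<Sum>k\<in>J i. u k)" if "i < m" for i
    proof -
      have "finite (I i)" using I \<open>i < m\<close> interval_family_finite by blast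
      have "(\<Sum>n\<in>I i. ?w n) = (\<Sum>n\<in>I i. if n \<in> {N1..<N} then window_sum u n else 0)"
        by (intro sum.cong) (auto simp: lincomb_unit_vec)
      also have "\<dots> = (\<Sum>n\<in>I i \<inter> {N1..<N}. window_sum u n)"
        using \<open>finite (I i)\<close> by (simp add: sum.inter_restrict)
      also have "\<dots> = (\<Sum>k\<in>J i. u k)"
        unfolding J_def using \<open>finite (I i)\<close> by (simp add: sum_window_sums)
      finally show ?thesis .
    qed
    then have "james_sum ?w m I = james_sum u m J"
      unfolding james_sum_def by (intro sum.cong) simp_all
    then show "\<exists>m' I'. interval_family m' I' \<and> james_sum ?w m I \<le> 1\<^sup>2 * james_sum u m' I'"
      using interval_family_UN_windows [OF I] unfolding J_def by auto
  qed simp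
  then show ?thesis by simp
qed

end

section \<open>The projection onto the closed span\<close>

locale equivalent_block_basis_large_sums = equivalent_block_basis +
  fixes N0 :: nat
  assumes large_block_sum: "\<And>n. N0 \<le> n \<Longrightarrow> c / 2 \<le> \<bar>block_sum n\<bar>"
begin

definition coeff :: "nat \<Rightarrow> (nat \<Rightarrow> real) \<Rightarrow> real" where
  "coeff n u =
    (if n < N0 then (\<Sum>k\<in>{p n..q n}. u k * x n k) / (\<Sum>k\<in>{p n..q n}. (x n k)\<^sup>2)
     else window_sum u n / block_sum n)"

text \<open>The series \<open>\<Sum> coeff n u * x n\<close>, evaluated coordinatewise: at \<open>k\<close> only \<open>x 0, \<dots>, x k\<close>
  can be nonzero.\<close>

definition proj :: "(nat \<Rightarrow> real) \<Rightarrow> nat \<Rightarrow> real" where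
  "proj u = (\<lambda>k. lincomb (\<lambda>n. coeff n u) x (Suc k) k)"

definition head_coeff_bound :: real where
  "head_coeff_bound = (\<Sum>n<N0. (\<Sum>k\<in>{p n..q n}. \<bar>x n k\<bar>) / (\<Sum>k\<in>{p n..q n}. (x n k)\<^sup>2))"

definition tail_coeff_bound :: real where
  "tail_coeff_bound = sqrt (2 + 16 * C\<^sup>2 / c\<^sup>2) / c"

definition proj_bound :: real where
  "proj_bound = C * (head_coeff_bound + tail_coeff_bound)"

lemma block_sum_nonzero: "N0 \<le> n \<Longrightarrow> block_sum n \<noteq> 0"
  using large_block_sum [of n] c_pos by auto

lemma coeff_x: "coeff n (x m) = (if n = m then 1 else 0)"
proof (cases "n < N0")
  case True
  have "(\<Sum>k\<in>{p n..q n}. x m k * x n k) = (if n = m then (\<Sum>k\<in>{p n..q n}. (x n k)\<^sup>2) else 0)"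
    using blocks_disjoint [of m n] x_eq_0_outside [of _ m] by (auto simp: power2_eq_square)
  then show ?thesis using True sum_sq_x_pos [of n] by (cases "n = m") (simp_all add: coeff_def)
next
  case False
  have "window_sum (x m) n = (if n = m then block_sum n else 0)"
    unfolding window_sum_def
    using sum_x_covering [OF _ block_subset_window] sum_x_disjoint [OF block_window_disjoint]
    by (auto simp: window_def)
  then show ?thesis using False block_sum_nonzero [of n] by (cases "n = m") (simp_all add: coeff_def)
qed

lemma coeff_linear: "coeff n (\<lambda>k. \<alpha> * u k + \<beta> * v k) = \<alpha> * coeff n u + \<beta> * coeff n v"
  by (simp add: coeff_def window_sum_def sum.distrib sum_distrib_left algebra_simps add_divide_distrib)

lemma coeff_cong: "(\<And>k. k \<in> window n \<Longrightarrow> u k = v k) \<Longrightarrow> coeff n u = coeff n v"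
  using block_subset_window [of n] by (auto simp: coeff_def window_sum_def intro!: sum.cong)

lemma coeff_seq_tail: "coeff n (seq_tail (p N) u) = (if N \<le> n then coeff n u else 0)"
proof (cases "N \<le> n")
  case True
  then show ?thesis
    using window_subset_atLeast [OF True] by (auto simp: seq_tail_def subset_iff intro!: coeff_cong)
next
  case False
  then have "coeff n (seq_tail (p N) u) = coeff n (\<lambda>_. 0)"
    using window_subset_lessThan [of n N] by (auto simp: seq_tail_def subset_iff intro!: coeff_cong)
  then show ?thesis using False by (simp add: coeff_def window_sum_def)
qed

lemma abs_coeff_le:
  assumes "u \<in> James" "n < N0"
  shows "\<bar>coeff n u\<bar> \<le> (\<Sum>k\<in>{p n..q n}. \<bar>x n k\<bar>) / (\<Sum>k\<in>{p n..q n}. (x n k)\<^sup>2) * jnorm u"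
proof -
  let ?D = "\<Sum>k\<in>{p n..q n}. (x n k)\<^sup>2"
  have "\<bar>\<Sum>k\<in>{p n..q n}. u k * x n k\<bar> \<le> (\<Sum>k\<in>{p n..q n}. \<bar>u k * x n k\<bar>)"
    by (rule sum_abs)
  also have "\<dots> \<le> (\<Sum>k\<in>{p n..q n}. jnorm u * \<bar>x n k\<bar>)"
    using abs_le_jnorm [OF assms(1)] by (intro sum_mono) (simp add: abs_mult mult_right_mono)
  also have "\<dots> = (\<Sum>k\<in>{p n..q n}. \<bar>x n k\<bar>) * jnorm u"
    by (simp add: sum_distrib_left mult.commute)
  finally have numerator: "\<bar>\<Sum>k\<in>{p n..q n}. u k * x n k\<bar> \<le> (\<Sum>k\<in>{p n..q n}. \<bar>x n k\<bar>) * jnorm u" .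
  have "\<bar>coeff n u\<bar> = \<bar>\<Sum>k\<in>{p n..q n}. u k * x n k\<bar> / ?D"
    using assms(2) sum_sq_x_pos [of n] by (simp add: coeff_def)
  also have "\<dots> \<le> (\<Sum>k\<in>{p n..q n}. \<bar>x n k\<bar>) * jnorm u / ?D"
    using numerator sum_sq_x_pos [of n] by (intro divide_right_mono) auto
  finally show ?thesis by simp
qed

lemma jnorm_head_coeffs_le:
  assumes "u \<in> James"
  shows "jnorm (lincomb (\<lambda>n. if n < N0 then coeff n u else 0) unit_vec N) \<le> head_coeff_bound * jnorm u"
proof -
  have "jnorm (lincomb (\<lambda>n. if n < N0 then coeff n u else 0) unit_vec N) \<le>
      (\<Sum>n<N. \<bar>if n < N0 then coeff n u else 0\<bar>)"
    using lincomb_unit_vec_James by blast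
  also have "\<dots> = (\<Sum>n<N. if n \<in> {..<N0} then \<bar>coeff n u\<bar> else 0)"
    by (intro sum.cong) auto
  also have "\<dots> = (\<Sum>n\<in>{..<N} \<inter> {..<N0}. \<bar>coeff n u\<bar>)"
    by (simp add: sum.inter_restrict)
  also have "\<dots> \<le> (\<Sum>n<N0. \<bar>coeff n u\<bar>)"
    by (intro sum_mono2) auto
  also have "\<dots> \<le> head_coeff_bound * jnorm u"
    unfolding head_coeff_bound_def sum_distrib_right using abs_coeff_le [OF assms] by (intro sum_mono) simp
  finally show ?thesis .
qed

lemma jnorm_tail_coeffs_le:
  assumes "u \<in> James"
  shows "jnorm (lincomb (\<lambda>n. if N0 \<le> n then coeff n u else 0) unit_vec N) \<le> tail_coeff_bound * jnorm u"
proof -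
  let ?a = "\<lambda>n. if N0 \<le> n then coeff n u else 0"
  have "c * jnorm (lincomb ?a unit_vec N) \<le>
      sqrt (2 + 16 * C\<^sup>2 / c\<^sup>2) * jnorm (lincomb (\<lambda>n. ?a n * block_sum n) unit_vec N)"
  proof (rule jnorm_lincomb_large_block_sums_le)
    fix n assume "?a n \<noteq> 0"
    then have "N0 \<le> n" by (auto split: if_split_asm)
    then show "c / 2 \<le> \<bar>block_sum n\<bar>" by (rule large_block_sum)
  qed
  also have "(\<lambda>n. ?a n * block_sum n) = (\<lambda>n. if N0 \<le> n then window_sum u n else 0)"
    using block_sum_nonzero by (auto simp: coeff_def)
  also have "sqrt (2 + 16 * C\<^sup>2 / c\<^sup>2) * jnorm (lincomb \<dots> unit_vec N) \<le> sqrt (2 + 16 * C\<^sup>2 / c\<^sup>2) * jnorm u"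
    using jnorm_window_sums_le [OF assms] by (intro mult_left_mono) simp_all
  finally show ?thesis
    using c_pos by (simp add: tail_coeff_bound_def field_simps)
qed

lemma coeff_lincomb: "coeff n (lincomb a x N) = (if n < N then a n else 0)"
proof (induction N)
  case 0
  have "lincomb a x 0 = (\<lambda>k. 0 * x 0 k + 0 * x 0 k)" by (simp add: lincomb_def)
  then show ?case using coeff_linear [of n 0 "x 0" 0 "x 0"] by simp
next
  case (Suc N)
  have "lincomb a x (Suc N) = (\<lambda>k. 1 * lincomb a x N k + a N * x N k)"
    by (simp add: lincomb_def)
  then show ?case using Suc coeff_linear [of n 1 "lincomb a x N" "a N" "x N"] coeff_x
    by (auto simp: less_Suc_eq)
qed

lemma proj_eq_lincomb: "k < N \<Longrightarrow> proj u k = lincomb (\<lambda>n. coeff n u) x N k"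
  unfolding proj_def lincomb_def using x_eq_0_below
  by (intro sum.mono_neutral_left) auto

lemma proj_linear: "proj (\<lambda>k. \<alpha> * u k + \<beta> * v k) = (\<lambda>k. \<alpha> * proj u k + \<beta> * proj v k)"
  by (simp add: proj_def lincomb_def coeff_linear sum.distrib sum_distrib_left algebra_simps)

lemma proj_lincomb: "proj (lincomb a x N) = lincomb a x N"
proof
  fix k
  let ?M = "max N (Suc k)"
  have "proj (lincomb a x N) k = lincomb (\<lambda>n. coeff n (lincomb a x N)) x ?M k"
    by (rule proj_eq_lincomb) simp
  also have "\<dots> = lincomb (\<lambda>n. if n < N then a n else 0) x ?M k"
    by (simp only: coeff_lincomb)
  also have "\<dots> = lincomb a x N k"
    unfolding lincomb_def by (rule sum.mono_neutral_cong_right) auto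
  finally show "proj (lincomb a x N) k = lincomb a x N k" .
qed

lemma proj_seq_tail: "proj (seq_tail (p N) u) = (\<lambda>k. proj u k - lincomb (\<lambda>n. coeff n u) x N k)"
proof
  fix k
  let ?M = "max N (Suc k)"
  have "proj (seq_tail (p N) u) k = (\<Sum>n<?M. (if N \<le> n then coeff n u else 0) * x n k)"
    using proj_eq_lincomb [of k ?M] by (simp add: lincomb_def coeff_seq_tail)
  also have "\<dots> = (\<Sum>n\<in>{N..<?M}. coeff n u * x n k)"
    by (rule sum.mono_neutral_cong_right) auto
  also have "\<dots> = (\<Sum>n<?M. coeff n u * x n k) - (\<Sum>n<N. coeff n u * x n k)"
    using sum_diff_nat_ivl [of 0 N ?M "\<lambda>n. coeff n u * x n k"] by (simp add: lessThan_atLeast0)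
  also have "\<dots> = proj u k - lincomb (\<lambda>n. coeff n u) x N k"
    using proj_eq_lincomb [of k ?M] by (simp add: lincomb_def)
  finally show "proj (seq_tail (p N) u) k = proj u k - lincomb (\<lambda>n. coeff n u) x N k" .
qed

lemma proj_bound_nonneg: "0 \<le> proj_bound"
proof -
  have "0 \<le> head_coeff_bound"
    unfolding head_coeff_bound_def using sum_sq_x_pos by (intro sum_nonneg divide_nonneg_pos) auto
  moreover have "0 \<le> tail_coeff_bound" using c_pos by (simp add: tail_coeff_bound_def)
  ultimately show ?thesis using C_pos by (simp add: proj_bound_def)
qed

lemma proj_James:
  assumes u: "u \<in> James"
  shows "proj u \<in> James \<and> jnorm (proj u) \<le> proj_bound * jnorm u"
proof (rule James_jnorm_le_by_truncations)
  show "0 \<le> proj_bound * jnorm u" using proj_bound_nonneg jnorm_nonneg [OF u] by simp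
next
  fix K
  let ?head = "lincomb (\<lambda>n. if n < N0 then coeff n u else 0) unit_vec K"
  let ?tail = "lincomb (\<lambda>n. if N0 \<le> n then coeff n u else 0) unit_vec K"
  have "lincomb (\<lambda>n. coeff n u) unit_vec K = (\<lambda>k. ?head k + ?tail k)"
    by (auto simp: lincomb_unit_vec)
  moreover have "jnorm (\<lambda>k. ?head k + ?tail k) \<le> jnorm ?head + jnorm ?tail"
    using James_jnorm_add lincomb_unit_vec_James by blast
  ultimately have "jnorm (lincomb (\<lambda>n. coeff n u) unit_vec K) \<le> jnorm ?head + jnorm ?tail"
    by simp
  also have "\<dots> \<le> (head_coeff_bound + tail_coeff_bound) * jnorm u"
    unfolding distrib_right by (intro add_mono jnorm_head_coeffs_le [OF u] jnorm_tail_coeffs_le [OF u])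
  finally have "C * jnorm (lincomb (\<lambda>n. coeff n u) unit_vec K) \<le> C * ((head_coeff_bound + tail_coeff_bound) * jnorm u)"
    using C_pos by simp
  then have "C * jnorm (lincomb (\<lambda>n. coeff n u) unit_vec K) \<le> proj_bound * jnorm u"
    using C_pos unfolding proj_bound_def by (simp add: mult.assoc)
  then have "jnorm (lincomb (\<lambda>n. coeff n u) x K) \<le> proj_bound * jnorm u"
    using upper_estimate [of "\<lambda>n. coeff n u" K] by linarith
  moreover have "\<forall>k<K. lincomb (\<lambda>n. coeff n u) x K k = proj u k"
    using proj_eq_lincomb by simp
  moreover have "lincomb (\<lambda>n. coeff n u) x K \<in> James"
    using lincomb_James x_James by blast
  ultimately show "\<exists>w\<in>James. jnorm w \<le> proj_bound * jnorm u \<and> (\<forall>k<K. w k = proj u k)"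
    by blast
qed

text \<open>The partial sums of \<open>proj u\<close> converge because the remainder is the projection of a tail of \<open>u\<close>.\<close>

lemma proj_in_closed_span:
  assumes u: "u \<in> James"
  shows "proj u \<in> closed_span x"
  unfolding closed_span_def
proof (intro CollectI conjI allI impI)
  show "proj u \<in> James" using proj_James [OF u] by simp
next
  fix \<epsilon> :: real assume "0 < \<epsilon>"
  define \<delta> where "\<delta> = \<epsilon> / (proj_bound + 1)"
  have "0 < \<delta>" using \<open>0 < \<epsilon>\<close> proj_bound_nonneg by (simp add: \<delta>_def)
  then obtain K where K: "\<forall>M\<ge>K. jnorm (seq_tail M u) \<le> \<delta>"
    using jnorm_seq_tail_eventually_le [OF u] by blast
  have "jnorm (\<lambda>k. proj u k - lincomb (\<lambda>n. coeff n u) x K k) = jnorm (proj (seq_tail (p K) u))"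
    by (simp add: proj_seq_tail)
  also have "\<dots> \<le> proj_bound * jnorm (seq_tail (p K) u)"
    using proj_James seq_tail_James [OF u] by blast
  also have "\<dots> \<le> proj_bound * \<delta>"
    using K le_p [of K] proj_bound_nonneg by (intro mult_left_mono) auto
  also have "\<dots> < \<epsilon>"
    using \<open>0 < \<epsilon>\<close> proj_bound_nonneg by (simp add: \<delta>_def field_simps)
  finally show "\<exists>a N. jnorm (\<lambda>k. proj u k - lincomb a x N k) < \<epsilon>" by blast
qed

lemma proj_eq_on_closed_span:
  assumes y: "y \<in> closed_span x"
  shows "proj y = y"
proof -
  have yJ: "y \<in> James" using y by (simp add: closed_span_def)
  let ?d = "\<lambda>k. proj y k - y k"
  have dJ: "?d \<in> James" using James_jnorm_diff proj_James yJ by blast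
  have "jnorm ?d \<le> 0 + \<epsilon>" if "0 < \<epsilon>" for \<epsilon>
  proof -
    have "0 < \<epsilon> / (proj_bound + 1)" using that proj_bound_nonneg by simp
    then obtain a N where approx: "jnorm (\<lambda>k. y k - lincomb a x N k) < \<epsilon> / (proj_bound + 1)"
      using y by (auto simp: closed_span_def)
    define r where "r = (\<lambda>k. y k - lincomb a x N k)"
    have rJ: "r \<in> James"
      unfolding r_def using James_jnorm_diff yJ lincomb_James x_James by blast
    have "y = (\<lambda>k. 1 * r k + 1 * lincomb a x N k)" by (simp add: r_def)
    then have "proj y = (\<lambda>k. proj r k + lincomb a x N k)"
      using proj_linear [of 1 r 1 "lincomb a x N"] by (simp add: proj_lincomb)
    then have "?d = (\<lambda>k. proj r k - r k)"
      by (simp add: r_def algebra_simps)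
    then have "jnorm ?d \<le> jnorm (proj r) + jnorm r"
      using James_jnorm_diff [OF conjunct1 [OF proj_James [OF rJ]] rJ] by simp
    also have "\<dots> \<le> (proj_bound + 1) * jnorm r"
      using proj_James [OF rJ] by (simp add: distrib_right)
    also have "\<dots> \<le> (proj_bound + 1) * (\<epsilon> / (proj_bound + 1))"
      using approx proj_bound_nonneg by (intro mult_left_mono) (simp_all add: r_def)
    finally show ?thesis using proj_bound_nonneg by simp
  qed
  then have "jnorm ?d \<le> 0" by (rule field_le_epsilon)
  then show ?thesis using James_eq_zero_if_jnorm_le_0 [OF dJ] by (simp add: fun_eq_iff)
qed

end

theorem mainTheorem14:
  fixes x :: "nat \<Rightarrow> nat \<Rightarrow> real"
  assumes "block_sequence x"
    and "equivalent_seq x unit_vec"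
  shows "complemented (closed_span x)"
proof -
  obtain c C where "0 < c" "0 < C"
    "\<forall>a N. c * jnorm (lincomb a unit_vec N) \<le> jnorm (lincomb a x N) \<and>
           jnorm (lincomb a x N) \<le> C * jnorm (lincomb a unit_vec N)"
    using assms(2) unfolding equivalent_seq_def by blast
  then interpret equivalent_block_basis x c C
    using assms(1) by unfold_locales auto
  obtain N0 where "\<forall>n\<ge>N0. c / 2 \<le> \<bar>block_sum n\<bar>"
    using eventually_large_block_sums by blast
  then interpret equivalent_block_basis_large_sums x c C N0
    by unfold_locales auto
  show ?thesis
    unfolding complemented_def
  proof (intro exI conjI)
    show "\<forall>u\<in>James. proj u \<in> closed_span x" using proj_in_closed_span by blast
    show "\<forall>u\<in>James. \<forall>v\<in>James. \<forall>\<alpha> \<beta>. proj (\<lambda>k. \<alpha> * u k + \<beta> * v k) = (\<lambda>k. \<alpha> * proj u k + \<beta> * proj v k)"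
      using proj_linear by blast
    show "\<forall>u\<in>James. jnorm (proj u) \<le> proj_bound * jnorm u" using proj_James by blast
    show "\<forall>y\<in>closed_span x. proj y = y" using proj_eq_on_closed_span by blast
  qed
qed

end
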